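(* Let $\epsilon=\epsilon_1\cdots\epsilon_n$ be an inversion sequence, and let $\epsilon'$ be the sequence obtained by applying Algorithm A (described below) to $\epsilon$. Then $\epsilon'$ is also an inversion sequence.
   Context: An inversion sequence of length $n$ is an integer sequence $\epsilon_1\cdots\epsilon_n$ with $0\le\epsilon_i<i$ for all $i$. The reduction of an integer word replaces each occurrence of its $k$-th smallest distinct value by $k-1$; a consecutive pattern $\underline{p_1p_2p_3p_4}$ occurs in a sequence at position $i$ if the reduction of its entries in positions $i,i+1,i+2,i+3$ equals $p_1p_2p_3p_4$. Let $p=\underline{0102}$ and $q=\underline{0112}$. Algorithm A, on input an integer sequence $\mathrm{seq}=\epsilon_1\cdots\epsilon_n$: let $E_p$, $E_q$ be the sets of positions of occurrences of $p$, resp. $q$, in the input sequence; set $\mathrm{last}:=$ null. For $i=1,2,\dots,n$ in order: let $N_p,N_q$ be the sets of positions of occurrences of $p$, resp. $q$, in the current sequence. If $i-2\in E_p$: set $\mathrm{last}:=\mathrm{seq}[i]$ and $\mathrm{seq}[i]:=\mathrm{seq}[i-1]$. Else if $i-2\in E_q$: set $\mathrm{last}:=\mathrm{seq}[i]$ and $\mathrm{seq}[i]:=\mathrm{seq}[i-2]$. Else if $i-2\in N_p$ or $i-2\in N_q$: swap the values of $\mathrm{seq}[i]$ and $\mathrm{last}$. Output $\mathrm{seq}$. *)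

theory Defs
  imports Main
begin

(* Sequences are int lists; the paper's 1-based entry seq[i] is the list entry  s ! (i - 1). *)

definition inv_seq :: "int list \<Rightarrow> bool" where
  "inv_seq e \<longleftrightarrow> (\<forall>i < length e. 0 \<le> e ! i \<and> e ! i < int (i + 1))"

(* reduction: k-th smallest distinct value is replaced by k-1 *)
definition reduction :: "int list \<Rightarrow> nat list" where
  "reduction xs = map (\<lambda>x. card {y \<in> set xs. y < x}) xs"

definition occurs_at :: "nat list \<Rightarrow> int list \<Rightarrow> nat \<Rightarrow> bool" where
  "occurs_at pat s pos \<longleftrightarrow> 1 \<le> pos \<and> pos + 3 \<le> length s \<and>
     reduction [s ! (pos - 1), s ! pos, s ! (pos + 1), s ! (pos + 2)] = pat"

definition occ :: "nat list \<Rightarrow> int list \<Rightarrow> nat set" where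
  "occ pat s = {pos. occurs_at pat s pos}"

definition pat_p :: "nat list" where "pat_p = [0,1,0,2]"
definition pat_q :: "nat list" where "pat_q = [0,1,1,2]"

(* State: (current sequence, last),
   last = None encodes null.  Result None signals that a swap with a null 'last'
   was attempted (the output would then not be an integer sequence). *)
definition algA_step :: "nat set \<Rightarrow> nat set \<Rightarrow> nat \<Rightarrow> int list \<times> int option
    \<Rightarrow> (int list \<times> int option) option" where
  "algA_step Ep Eq i st = (case st of (s, l) \<Rightarrow>
     (if 3 \<le> i \<and> i - 2 \<in> Ep then Some (s[i - 1 := s ! (i - 2)], Some (s ! (i - 1)))
      else if 3 \<le> i \<and> i - 2 \<in> Eq then Some (s[i - 1 := s ! (i - 3)], Some (s ! (i - 1)))
      else if 3 \<le> i \<and> (i - 2 \<in> occ pat_p s \<or> i - 2 \<in> occ pat_q s) then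
        (case l of None \<Rightarrow> None | Some v \<Rightarrow> Some (s[i - 1 := v], Some (s ! (i - 1))))
      else Some (s, l)))"

definition algA :: "int list \<Rightarrow> int list option" where
  "algA s = map_option fst
     (foldl (\<lambda>acc i. Option.bind acc (algA_step (occ pat_p s) (occ pat_q s) i))
        (Some (s, None)) [1..<length s + 1])"

end

theory Submission
  imports Defs
begin

(* Every entry Algorithm A writes at position i is an entry of the current sequence at a position
   at most i, or the value of last, which was itself read at a position below i; so all bounds
   are kept. The swap branch cannot meet a null last: as long as last is null no entry has been
   written, hence the current occurrences of p and q are those of the input, and those positions
   are caught by the first two branches. *)

lemma inv_seq_nth_bounds:
  assumes "inv_seq s" "j < length s"
  shows "0 \<le> s ! j" "s ! j < int (j + 1)"
  using assms unfolding inv_seq_def by auto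

lemma inv_seq_list_update:
  assumes "inv_seq s" "0 \<le> x" "x < int (j + 1)"
  shows "inv_seq (s[j := x])"
  using assms unfolding inv_seq_def
  by (metis length_list_update nth_list_update_eq nth_list_update_neq)

definition algA_run :: "int list \<Rightarrow> nat \<Rightarrow> (int list \<times> int option) option" where
  "algA_run e k = foldl (\<lambda>acc i. Option.bind acc (algA_step (occ pat_p e) (occ pat_q e) i))
     (Some (e, None)) [1..<k + 1]"

lemma algA_run_0: "algA_run e 0 = Some (e, None)"
  by (simp add: algA_run_def)

lemma algA_run_Suc:
  "algA_run e (Suc k) = Option.bind (algA_run e k) (algA_step (occ pat_p e) (occ pat_q e) (Suc k))"
  by (simp add: algA_run_def)

lemma algA_eq_algA_run: "algA e = map_option fst (algA_run e (length e))"
  by (simp add: algA_def algA_run_def)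

definition algA_invariant :: "int list \<Rightarrow> nat \<Rightarrow> int list \<Rightarrow> int option \<Rightarrow> bool" where
  "algA_invariant e k s l \<longleftrightarrow> length s = length e \<and> inv_seq s \<and> (l = None \<longrightarrow> s = e) \<and>
     (\<forall>v. l = Some v \<longrightarrow> 0 \<le> v \<and> v < int k + 1)"

lemma algA_invariant_update:
  assumes "algA_invariant e k s l" "k < length e" "0 \<le> v" "v < int k + 1"
  shows "algA_invariant e (Suc k) (s[k := v]) (Some (s ! k))"
proof -
  have "inv_seq s" "length s = length e"
    using assms(1) by (auto simp: algA_invariant_def)
  then show ?thesis
    using assms(2-4) inv_seq_nth_bounds[of s k]
    by (auto simp: algA_invariant_def intro!: inv_seq_list_update)
qed

lemma algA_step_preserves_invariant:
  assumes inv: "algA_invariant e k s l" and k: "k < length e"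
  obtains s' l' where "algA_step (occ pat_p e) (occ pat_q e) (Suc k) (s, l) = Some (s', l')"
    and "algA_invariant e (Suc k) s' l'"
proof -
  have s: "inv_seq s" "length s = length e" "l = None \<Longrightarrow> s = e"
    and last: "\<And>v. l = Some v \<Longrightarrow> 0 \<le> v" "\<And>v. l = Some v \<Longrightarrow> v < int k + 1"
    using inv by (auto simp: algA_invariant_def)
  have entry: "0 \<le> s ! j" "s ! j < int k + 1" if "j \<le> k" for j
    using inv_seq_nth_bounds[OF s(1), of j] that k s(2) by auto
  have index: "3 \<le> Suc k \<longleftrightarrow> 2 \<le> k" "Suc k - 1 = k" "Suc k - 2 = k - 1" "Suc k - 3 = k - 2"
    by auto
  consider (p) "2 \<le> k" "k - 1 \<in> occ pat_p e"
    | (q) "2 \<le> k" "k - 1 \<notin> occ pat_p e" "k - 1 \<in> occ pat_q e"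
    | (swap) v where "2 \<le> k" "k - 1 \<notin> occ pat_p e" "k - 1 \<notin> occ pat_q e" "l = Some v"
        "k - 1 \<in> occ pat_p s \<or> k - 1 \<in> occ pat_q s"
    | (none) "\<not> (2 \<le> k \<and> (k - 1 \<in> occ pat_p e \<or> k - 1 \<in> occ pat_q e \<or>
          k - 1 \<in> occ pat_p s \<or> k - 1 \<in> occ pat_q s))"
    using s(3) by (cases l) fastforce+
  then show ?thesis
  proof cases
    case p
    then have "algA_step (occ pat_p e) (occ pat_q e) (Suc k) (s, l) =
        Some (s[k := s ! (k - 1)], Some (s ! k))"
      by (simp add: algA_step_def index)
    then show ?thesis
      using that algA_invariant_update[OF inv k entry[of "k - 1"]] by simp
  next
    case q
    then have "algA_step (occ pat_p e) (occ pat_q e) (Suc k) (s, l) =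
        Some (s[k := s ! (k - 2)], Some (s ! k))"
      by (simp add: algA_step_def index)
    then show ?thesis
      using that algA_invariant_update[OF inv k entry[of "k - 2"]] by simp
  next
    case (swap v)
    then have "algA_step (occ pat_p e) (occ pat_q e) (Suc k) (s, l) =
        Some (s[k := v], Some (s ! k))"
      by (simp add: algA_step_def index)
    then show ?thesis
      using that algA_invariant_update[OF inv k last[OF swap(4)]] by simp
  next
    case none
    then have "algA_step (occ pat_p e) (occ pat_q e) (Suc k) (s, l) = Some (s, l)"
      by (auto simp: algA_step_def index)
    moreover have "algA_invariant e (Suc k) s l"
      using inv by (auto simp: algA_invariant_def)
    ultimately show ?thesis
      using that by simp
  qed
qed

lemma algA_run_invariant:
  assumes "inv_seq e" "k \<le> length e"
  shows "\<exists>s l. algA_run e k = Some (s, l) \<and> algA_invariant e k s l"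
  using assms(2)
proof (induction k)
  case 0
  then show ?case
    using assms(1) by (simp add: algA_run_0 algA_invariant_def)
next
  case (Suc k)
  then obtain s l where "algA_run e k = Some (s, l)" "algA_invariant e k s l"
    by auto
  moreover obtain s' l' where "algA_step (occ pat_p e) (occ pat_q e) (Suc k) (s, l) = Some (s', l')"
    "algA_invariant e (Suc k) s' l'"
    using algA_step_preserves_invariant[OF \<open>algA_invariant e k s l\<close>] Suc.prems by auto
  ultimately show ?case
    by (simp add: algA_run_Suc)
qed

theorem proposition1:
  fixes e :: "int list"
  assumes "inv_seq e"
  shows "\<exists>e'. algA e = Some e' \<and> inv_seq e'"
proof -
  obtain s l where "algA_run e (length e) = Some (s, l)" "algA_invariant e (length e) s l"
    using algA_run_invariant[OF assms le_refl] by blast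
  then show ?thesis
    by (auto simp: algA_eq_algA_run algA_invariant_def)
qed

end
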